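(* Let $Q=[u_1,u_2,u_3,u_4,u_5,u_6]\subset\mathbb{S}^2$ be a spherical polygon not contained in any closed hemisphere and without self-intersections and antipodal intersections. Then $Q$ has 6 inflections.
   Context: A spherical polygon $Q=[u_1,\dots,u_n]$ has edges the minimal great-circle arcs from $u_i$ to $u_{i+1}$ (indices mod $n$). Standing assumption: no three vertices lie on a common great circle. A self-intersection is a pair of non-adjacent edges that intersect; an antipodal intersection is a pair of non-adjacent edges $e,f$ with $e\cap(-f)\ne\emptyset$. With $[a,b,c]$ the determinant, $\{u_i,u_{i+1}\}$ is an inflection if $[u_{i-1},u_i,u_{i+1}]$ and $[u_i,u_{i+1},u_{i+2}]$ have opposite signs. *)

theory Defs
  imports "HOL-Analysis.Analysis"
begin

text \<open>Points of the unit sphere are unit vectors of real^3. A spherical polygon with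
  n vertices is a function u :: nat => real^3; vertex i is u (i mod n).\<close>

definition vtx :: "nat \<Rightarrow> (nat \<Rightarrow> real^3) \<Rightarrow> nat \<Rightarrow> real^3" where
  "vtx n u i = u (i mod n)"

definition det3 :: "real^3 \<Rightarrow> real^3 \<Rightarrow> real^3 \<Rightarrow> real" where
  "det3 a b c = det ((\<chi> i. if i = 1 then a else if i = 2 then b else c) :: real^3^3)"

definition on_sphere :: "real^3 \<Rightarrow> bool" where
  "on_sphere x \<longleftrightarrow> norm x = 1"

text \<open>Minimal great-circle arc between unit vectors a, b with b \<noteq> -a:
  the unit vectors in the cone spanned by a and b.\<close>
definition arc :: "real^3 \<Rightarrow> real^3 \<Rightarrow> (real^3) set" where
  "arc a b = {x. norm x = 1 \<and> (\<exists>\<alpha> \<beta>. \<alpha> \<ge> 0 \<and> \<beta> \<ge> 0 \<and> x = \<alpha> *\<^sub>R a + \<beta> *\<^sub>R b)}"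

definition edge :: "nat \<Rightarrow> (nat \<Rightarrow> real^3) \<Rightarrow> nat \<Rightarrow> (real^3) set" where
  "edge n u i = arc (vtx n u i) (vtx n u (i + 1))"

definition nonadjacent :: "nat \<Rightarrow> nat \<Rightarrow> nat \<Rightarrow> bool" where
  "nonadjacent n i j \<longleftrightarrow> i < n \<and> j < n \<and> i \<noteq> j \<and> (i + 1) mod n \<noteq> j \<and> (j + 1) mod n \<noteq> i"

definition no_three_on_great_circle :: "nat \<Rightarrow> (nat \<Rightarrow> real^3) \<Rightarrow> bool" where
  "no_three_on_great_circle n u \<longleftrightarrow>
     (\<forall>i j k. i < n \<and> j < n \<and> k < n \<and> i \<noteq> j \<and> j \<noteq> k \<and> i \<noteq> k \<longrightarrow> det3 (u i) (u j) (u k) \<noteq> 0)"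

definition in_closed_hemisphere :: "nat \<Rightarrow> (nat \<Rightarrow> real^3) \<Rightarrow> bool" where
  "in_closed_hemisphere n u \<longleftrightarrow> (\<exists>v. v \<noteq> 0 \<and> (\<forall>i<n. v \<bullet> u i \<ge> 0))"

definition has_self_intersection :: "nat \<Rightarrow> (nat \<Rightarrow> real^3) \<Rightarrow> bool" where
  "has_self_intersection n u \<longleftrightarrow>
     (\<exists>i j. nonadjacent n i j \<and> edge n u i \<inter> edge n u j \<noteq> {})"

definition has_antipodal_intersection :: "nat \<Rightarrow> (nat \<Rightarrow> real^3) \<Rightarrow> bool" where
  "has_antipodal_intersection n u \<longleftrightarrow>
     (\<exists>i j. nonadjacent n i j \<and> edge n u i \<inter> uminus ` edge n u j \<noteq> {})"

definition is_inflection :: "nat \<Rightarrow> (nat \<Rightarrow> real^3) \<Rightarrow> nat \<Rightarrow> bool" where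
  "is_inflection n u i \<longleftrightarrow>
     det3 (vtx n u (i + n - 1)) (vtx n u i) (vtx n u (i + 1))
       * det3 (vtx n u i) (vtx n u (i + 1)) (vtx n u (i + 2)) < 0"

definition num_inflections :: "nat \<Rightarrow> (nat \<Rightarrow> real^3) \<Rightarrow> nat" where
  "num_inflections n u = card {i. i < n \<and> is_inflection n u i}"

end

theory Submission
  imports Defs "HOL-Analysis.Cross3"
begin

(*
  Everything is read off the signs of the twenty determinants [u_i,u_j,u_k], i < j < k, which are
  nonzero by general position.  Since Q lies in no closed hemisphere, the great circle through any
  edge has vertices strictly on both sides.  Two nonadjacent edges never separate each other's
  endpoints: otherwise the line in which their planes meet is spanned by a unit vector q with q in
  both arcs, or q in one arc and -q in the other, i.e. an intersection or an antipodal intersection.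
  Finally the determinants obey the three-term Grassmann-Pluecker relations.  A finite check over
  sign patterns shows that for six vertices these constraints leave only patterns in which the turns
  [u_(i-1),u_i,u_(i+1)] alternate in sign, so every edge is an inflection.
*)

lemma det3_expand:
  "det3 a b c = a$1 * b$2 * c$3 + a$2 * b$3 * c$1 + a$3 * b$1 * c$2
              - a$1 * b$3 * c$2 - a$2 * b$1 * c$3 - a$3 * b$2 * c$1"
  unfolding det3_def det_3 by simp

lemma det3_eq_cross3_inner: "det3 a b c = cross3 a b \<bullet> c"
  by (simp add: det3_expand cross3_simps)

lemma det3_swap12: "det3 b a c = - det3 a b c"
  and det3_swap23: "det3 a c b = - det3 a b c"
  by (simp_all add: det3_expand)

lemma det3_repeated: "det3 a a c = 0" "det3 a c a = 0" "det3 c a a = 0"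
  by (simp_all add: det3_expand)

lemma det3_zero_left: "det3 0 b c = 0"
  by (simp add: det3_expand)

lemma grassmann_pluecker:
  "det3 a b c * det3 a d e - det3 a b d * det3 a c e + det3 a b e * det3 a c d = 0"
  unfolding det3_expand by algebra

lemma grassmann_pluecker_signs:
  "\<not> (0 < det3 a b c * det3 a d e \<and> det3 a b d * det3 a c e < 0 \<and> 0 < det3 a b e * det3 a c d)"
  "\<not> (det3 a b c * det3 a d e < 0 \<and> 0 < det3 a b d * det3 a c e \<and> det3 a b e * det3 a c d < 0)"
  using grassmann_pluecker[of a b c d e] by linarith+

lemma arcI: "norm x = 1 \<Longrightarrow> 0 \<le> s \<Longrightarrow> 0 \<le> t \<Longrightarrow> x = s *\<^sub>R a + t *\<^sub>R b \<Longrightarrow> x \<in> arc a b"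
  unfolding arc_def by blast

lemma sgn_in_arc_or_antipodal:
  assumes "0 < s * t" and "x = s *\<^sub>R a + t *\<^sub>R b" and "x \<noteq> 0"
  shows "sgn x \<in> arc a b \<or> - sgn x \<in> arc a b"
proof -
  have norm: "norm (sgn x) = 1" "norm (- sgn x) = 1"
    using \<open>x \<noteq> 0\<close> by (simp_all add: norm_sgn)
  have sgn: "sgn x = (s / norm x) *\<^sub>R a + (t / norm x) *\<^sub>R b"
    "- sgn x = (- s / norm x) *\<^sub>R a + (- t / norm x) *\<^sub>R b"
    using assms(2) by (simp_all add: sgn_div_norm divide_inverse_commute algebra_simps)
  from assms(1) consider "0 < s" "0 < t" | "s < 0" "t < 0"
    by (auto simp: zero_less_mult_iff)
  then show ?thesis
  proof cases
    case 1
    then have "sgn x \<in> arc a b"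
      by (intro arcI[OF norm(1) _ _ sgn(1)]) simp_all
    then show ?thesis ..
  next
    case 2
    then have "- sgn x \<in> arc a b"
      by (intro arcI[OF norm(2) _ _ sgn(2)]) (simp_all add: divide_nonpos_nonneg)
    then show ?thesis ..
  qed
qed

lemma separated_arcs_meet:
  assumes "det3 a b c * det3 a b d < 0" and "det3 c d a * det3 c d b < 0"
  shows "arc a b \<inter> arc c d \<noteq> {} \<or> arc a b \<inter> uminus ` arc c d \<noteq> {}"
proof -
  define p where "p = det3 a b d *\<^sub>R c - det3 a b c *\<^sub>R d"
  have "det3 p d a = det3 a b d * det3 c d a"
    by (simp add: p_def det3_expand algebra_simps)
  moreover have "det3 a b d \<noteq> 0" "det3 c d a \<noteq> 0"
    using assms by auto
  ultimately have "p \<noteq> 0"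
    by (auto simp: det3_zero_left)
  have "p = det3 a b d *\<^sub>R c + (- det3 a b c) *\<^sub>R d"
    by (simp add: p_def)
  with assms(1) \<open>p \<noteq> 0\<close> have cd: "sgn p \<in> arc c d \<or> - sgn p \<in> arc c d"
    by (intro sgn_in_arc_or_antipodal[of "det3 a b d" "- det3 a b c"])
      (auto simp: mult_less_0_iff zero_less_mult_iff)
  have "p = (- det3 c d b) *\<^sub>R a + det3 c d a *\<^sub>R b"
    by (simp add: p_def det3_expand vec_eq_iff forall_3 algebra_simps)
  with assms(2) \<open>p \<noteq> 0\<close> have ab: "sgn p \<in> arc a b \<or> - sgn p \<in> arc a b"
    by (intro sgn_in_arc_or_antipodal[of "- det3 c d b" "det3 c d a"])
      (auto simp: mult_less_0_iff zero_less_mult_iff)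
  from ab cd obtain x where "x \<in> arc a b" "x \<in> arc c d \<or> - x \<in> arc c d"
    by (metis minus_minus)
  moreover have "x \<in> uminus ` arc c d" if "- x \<in> arc c d"
    by (rule image_eqI[OF _ that]) simp
  ultimately show ?thesis
    by (metis IntI empty_iff)
qed

lemma nonadjacent_edges_not_separated:
  assumes "\<not> has_self_intersection n u" and "\<not> has_antipodal_intersection n u"
    and "nonadjacent n i j"
  shows "\<not> (det3 (vtx n u i) (vtx n u (i + 1)) (vtx n u j)
              * det3 (vtx n u i) (vtx n u (i + 1)) (vtx n u (j + 1)) < 0
          \<and> det3 (vtx n u j) (vtx n u (j + 1)) (vtx n u i)
              * det3 (vtx n u j) (vtx n u (j + 1)) (vtx n u (i + 1)) < 0)"
  using separated_arcs_meet assms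
  unfolding has_self_intersection_def has_antipodal_intersection_def edge_def by blast

lemma vertices_on_both_sides:
  assumes "\<not> in_closed_hemisphere n u" and "cross3 a b \<noteq> 0"
  shows "\<exists>k<n. det3 a b (u k) < 0" and "\<exists>k<n. 0 < det3 a b (u k)"
proof -
  have "\<exists>k<n. v \<bullet> u k < 0" if "v \<noteq> 0" for v
    using assms(1) that unfolding in_closed_hemisphere_def by (meson not_le)
  from this[of "cross3 a b"] this[of "- cross3 a b"] assms(2)
  show "\<exists>k<n. det3 a b (u k) < 0" "\<exists>k<n. 0 < det3 a b (u k)"
    by (auto simp: det3_eq_cross3_inner)
qed

lemma vertices_on_both_sides_of_edge:
  assumes "no_three_on_great_circle n u" and "\<not> in_closed_hemisphere n u"
    and "3 \<le> n" and "i < n"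
  shows "(\<exists>k<n. det3 (vtx n u i) (vtx n u (i + 1)) (u k) < 0)
       \<and> (\<exists>k<n. 0 < det3 (vtx n u i) (vtx n u (i + 1)) (u k))"
proof -
  from assms(3,4) have "i \<noteq> (i + 1) mod n" "(i + 1) mod n \<noteq> (i + 2) mod n" "i \<noteq> (i + 2) mod n"
    by (auto simp: mod_Suc)
  with assms(1,4) have "det3 (vtx n u i) (vtx n u (i + 1)) (vtx n u (i + 2)) \<noteq> 0"
    unfolding no_three_on_great_circle_def vtx_def by simp
  then have "cross3 (vtx n u i) (vtx n u (i + 1)) \<noteq> 0"
    by (auto simp: det3_eq_cross3_inner)
  then show ?thesis
    using vertices_on_both_sides[OF assms(2)] by blast
qed

lemma all_less_six: "(\<forall>i<6. P i) \<longleftrightarrow> P 0 \<and> P 1 \<and> P 2 \<and> P 3 \<and> P 4 \<and> P (5::nat)"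
  by (simp add: numeral_eq_Suc All_less_Suc conj_ac)

lemma ex_less_six: "(\<exists>i<6. P i) \<longleftrightarrow> P 0 \<or> P 1 \<or> P 2 \<or> P 3 \<or> P 4 \<or> P (5::nat)"
  by (simp add: numeral_eq_Suc Ex_less_Suc disj_ac)

lemma hexagon_all_inflections:
  fixes u :: "nat \<Rightarrow> real^3"
  assumes general: "no_three_on_great_circle 6 u"
    and spread: "\<not> in_closed_hemisphere 6 u"
    and simple: "\<not> has_self_intersection 6 u"
    and no_antipodal: "\<not> has_antipodal_intersection 6 u"
  shows "\<forall>i<6. is_inflection 6 u i"
proof -
  let ?v = "vtx 6 u"
  have nonzero: "\<forall>i<6. \<forall>j<6. \<forall>k<6. i < j \<and> j < k \<longrightarrow> det3 (u i) (u j) (u k) \<noteq> 0"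
    using general unfolding no_three_on_great_circle_def by auto
  have sides: "\<forall>i<6. (\<exists>k<6. det3 (?v i) (?v (i + 1)) (u k) < 0)
                    \<and> (\<exists>k<6. 0 < det3 (?v i) (?v (i + 1)) (u k))"
    using vertices_on_both_sides_of_edge[OF general spread] by simp
  have uncrossed: "\<forall>i<6. \<forall>j<6. nonadjacent 6 i j \<longrightarrow>
      \<not> (det3 (?v i) (?v (i + 1)) (?v j) * det3 (?v i) (?v (i + 1)) (?v (j + 1)) < 0
        \<and> det3 (?v j) (?v (j + 1)) (?v i) * det3 (?v j) (?v (j + 1)) (?v (i + 1)) < 0)"
    using nonadjacent_edges_not_separated[OF simple no_antipodal] by blast
  \<comment> \<open>Of the thirty three-term relations, those with pivot a and the four other vertices
    omitting a+1, resp. a+2, already suffice.\<close>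
  let ?signs = "\<lambda>a b c d e.
    \<not> (0 < det3 a b c * det3 a d e \<and> det3 a b d * det3 a c e < 0 \<and> 0 < det3 a b e * det3 a c d) \<and>
    \<not> (det3 a b c * det3 a d e < 0 \<and> 0 < det3 a b d * det3 a c e \<and> det3 a b e * det3 a c d < 0)"
  have pluecker: "\<forall>a<6. ?signs (?v a) (?v (a + 2)) (?v (a + 3)) (?v (a + 4)) (?v (a + 5))
                    \<and> ?signs (?v a) (?v (a + 1)) (?v (a + 3)) (?v (a + 4)) (?v (a + 5))"
    by (intro allI impI conjI grassmann_pluecker_signs)
  \<comment> \<open>Instantiate everything at numerals and sort the indices of each determinant, so that what
    remains is propositional in the signs of the twenty determinants with i < j < k.  Deleting
    One_nat_def and unfolding add_0 keeps simp from turning some indices into Suc terms.\<close>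
  have sort12: "det3 (u i) (u j) (u k) = - det3 (u j) (u i) (u k)" if "j < i" for i j k
    by (rule det3_swap12)
  have sort23: "det3 (u i) (u j) (u k) = - det3 (u i) (u k) (u j)" if "k < j" for i j k
    by (rule det3_swap23)
  note One_nat_def [simp del] det3_repeated [simp]
  note sign_rules = sort12 sort23 mult_minus_left mult_minus_right
    neg_less_0_iff_less neg_0_less_iff_less mult_less_0_iff zero_less_mult_iff
  note constraints = nonzero sides uncrossed pluecker
  note ground = constraints[unfolded all_less_six ex_less_six nonadjacent_def vtx_def add_0,
    simplified, simplified sign_rules]
  show ?thesis
  proof (rule ccontr)
    assume "\<not> ?thesis"
    from this [unfolded all_less_six is_inflection_def vtx_def add_0, simplified, simplified sign_rules]
    show False
      using ground by smt
  qed
qed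

theorem proposition4:
  fixes u :: "nat \<Rightarrow> real^3"
  assumes "\<forall>i<6. on_sphere (u i)"
    and "no_three_on_great_circle 6 u"
    and "\<not> in_closed_hemisphere 6 u"
    and "\<not> has_self_intersection 6 u"
    and "\<not> has_antipodal_intersection 6 u"
  shows "num_inflections 6 u = 6"
proof -
  have "{i. i < 6 \<and> is_inflection 6 u i} = {..<6}"
    using hexagon_all_inflections[OF assms(2-5)] by auto
  then show ?thesis
    unfolding num_inflections_def by simp
qed

end
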